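(* Let $\mathcal{S}\subseteq\mathcal{L}$, $\phi\in\mathcal{L}$, and let $\mathcal{AF}_{\vdash}=(\vdash,\overline{\cdot},\mathsf{id})$ be contrapositable with $\vdash$ satisfying Cut. If there is a $\Theta\subseteq\bigcap\mathsf{MCS}(\mathcal{AF}_{\vdash}(\mathcal{S}))$ with $\Theta\vdash\phi$, then $\bigcap\mathsf{MCS}(\mathcal{AF}_{\vdash}(\mathcal{S}))=\bigcap\mathsf{MCS}(\mathcal{AF}_{\vdash^{+\phi}}(\mathcal{S}))$.
   Context: $\mathcal{L}$ is a set of formulas; ${\vdash}\subseteq\wp_{\sf fin}(\mathcal{L})\times\mathcal{L}$ is arbitrary and $\overline{\cdot}:\mathcal{L}\to\wp(\mathcal{L})$. $\vdash^{+\phi}$ is the transitive closure of ${\vdash}\cup\{(\emptyset,\phi)\}$. Cut: for every $\phi$ and finite $\Gamma,\Delta$, if $\Gamma\vdash\phi$ and $\Delta\vdash^{+\phi}\gamma$ then $\Gamma\cup\Delta\vdash\gamma$. Contrapositable: for all finite $\Theta$, if $\Theta\vdash\gamma'$ with $\gamma'\in\overline{\gamma}$, then for every $\sigma\in\Theta$, $(\Theta\cup\{\gamma\})\setminus\{\sigma\}\vdash\sigma'$ for some $\sigma'\in\overline{\sigma}$. For a relation $\vdash'$ (here $\vdash$ or $\vdash^{+\phi}$), $\Theta\subseteq\mathcal{S}$ is $\mathcal{AF}_{\vdash'}(\mathcal{S})$-inconsistent iff there are $\Theta'\subseteq\Theta$ and $\gamma\in\Theta'$ with $\Theta'\setminus\{\gamma\}\vdash'\gamma'$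 for some $\gamma'\in\overline{\gamma}$, consistent otherwise; $\mathsf{MCS}(\mathcal{AF}_{\vdash'}(\mathcal{S}))$ is the set of maximal consistent subsets of $\mathcal{S}$ (consistent with no consistent proper superset within $\mathcal{S}$). *)

theory Defs
  imports Main
begin

(* A derivability relation  \<turnstile> \<subseteq> \<wp>_fin(L) \<times> L  is modelled as a predicate
   der :: 'a set \<Rightarrow> 'a \<Rightarrow> bool  together with the assumption that only finite
   premise sets occur (see fin_rel). *)

definition fin_rel :: "('a set \<Rightarrow> 'a \<Rightarrow> bool) \<Rightarrow> bool" where
  "fin_rel der \<longleftrightarrow> (\<forall>\<Gamma> \<psi>. der \<Gamma> \<psi> \<longrightarrow> finite \<Gamma>)"

inductive plus_der :: "('a set \<Rightarrow> 'a \<Rightarrow> bool) \<Rightarrow> 'a \<Rightarrow> 'a set \<Rightarrow> 'a \<Rightarrow> bool"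
  for der :: "'a set \<Rightarrow> 'a \<Rightarrow> bool" and \<phi> :: 'a where
  base: "der \<Gamma> \<psi> \<Longrightarrow> plus_der der \<phi> \<Gamma> \<psi>"
| ax: "plus_der der \<phi> {} \<phi>"
| trans: "plus_der der \<phi> \<Gamma> \<psi> \<Longrightarrow> plus_der der \<phi> \<Delta> \<gamma> \<Longrightarrow> \<psi> \<in> \<Delta> \<Longrightarrow>
           plus_der der \<phi> (\<Gamma> \<union> (\<Delta> - {\<psi>})) \<gamma>"

definition satisfies_cut :: "('a set \<Rightarrow> 'a \<Rightarrow> bool) \<Rightarrow> bool" where
  "satisfies_cut der \<longleftrightarrow>
     (\<forall>\<phi> \<Gamma> \<Delta> \<gamma>. finite \<Gamma> \<longrightarrow> finite \<Delta> \<longrightarrow> der \<Gamma> \<phi> \<longrightarrow> plus_der der \<phi> \<Delta> \<gamma> \<longrightarrow>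
        der (\<Gamma> \<union> \<Delta>) \<gamma>)"

definition contrapositable :: "('a set \<Rightarrow> 'a \<Rightarrow> bool) \<Rightarrow> ('a \<Rightarrow> 'a set) \<Rightarrow> bool" where
  "contrapositable der ctr \<longleftrightarrow>
     (\<forall>\<Theta> \<gamma> \<gamma>'. finite \<Theta> \<longrightarrow> der \<Theta> \<gamma>' \<longrightarrow> \<gamma>' \<in> ctr \<gamma> \<longrightarrow>
        (\<forall>\<sigma>\<in>\<Theta>. \<exists>\<sigma>'\<in>ctr \<sigma>. der ((\<Theta> \<union> {\<gamma>}) - {\<sigma>}) \<sigma>'))"

definition af_inconsistent :: "('a set \<Rightarrow> 'a \<Rightarrow> bool) \<Rightarrow> ('a \<Rightarrow> 'a set) \<Rightarrow> 'a set \<Rightarrow> bool" where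
  "af_inconsistent der ctr \<Theta> \<longleftrightarrow>
     (\<exists>\<Theta>' \<gamma> \<gamma>'. \<Theta>' \<subseteq> \<Theta> \<and> \<gamma> \<in> \<Theta>' \<and> \<gamma>' \<in> ctr \<gamma> \<and> der (\<Theta>' - {\<gamma>}) \<gamma>')"

abbreviation af_consistent :: "('a set \<Rightarrow> 'a \<Rightarrow> bool) \<Rightarrow> ('a \<Rightarrow> 'a set) \<Rightarrow> 'a set \<Rightarrow> bool" where
  "af_consistent der ctr \<Theta> \<equiv> \<not> af_inconsistent der ctr \<Theta>"

definition MCS :: "('a set \<Rightarrow> 'a \<Rightarrow> bool) \<Rightarrow> ('a \<Rightarrow> 'a set) \<Rightarrow> 'a set \<Rightarrow> 'a set set" where
  "MCS der ctr S = {\<Theta>. \<Theta> \<subseteq> S \<and> af_consistent der ctr \<Theta> \<and>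
      (\<forall>\<Theta>''. \<Theta> \<subset> \<Theta>'' \<and> \<Theta>'' \<subseteq> S \<longrightarrow> af_inconsistent der ctr \<Theta>'')}"

end

theory Submission
  imports Defs
begin

(* If \<Theta> \<turnstile> \<phi> with \<Theta> inside every maximal consistent subset, then Cut turns every
   \<turnstile>^{+\<phi>}-derivation of a contrary within such a set M into a \<turnstile>-derivation from M itself,
   and contrapositability lets that derivation avoid the attacked formula.  So each
   \<turnstile>-maximal consistent subset stays \<turnstile>^{+\<phi>}-consistent, hence \<turnstile>^{+\<phi>}-maximal.
   Conversely a \<turnstile>^{+\<phi>}-maximal set is \<turnstile>-consistent, extends by Zorn's lemma to a
   \<turnstile>-maximal one, which is \<turnstile>^{+\<phi>}-consistent, so the two coincide. *)

lemma plus_der_finite_premises: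
  assumes "fin_rel der" and "plus_der der \<phi> \<Gamma> \<psi>"
  shows "finite \<Gamma>"
  using assms(2) by induction (use assms(1) in \<open>auto simp: fin_rel_def\<close>)

lemma der_le_plus_der: "der \<le> plus_der der \<phi>"
  by (auto intro: plus_der.base)

lemma af_inconsistent_der_mono:
  assumes "der \<le> der'" and "af_inconsistent der ctr X"
  shows "af_inconsistent der' ctr X"
  using assms unfolding af_inconsistent_def le_fun_def le_bool_def by blast

lemma contrapositable_contrary_without_self:
  assumes "contrapositable der ctr" and "finite \<Gamma>" and "der \<Gamma> \<gamma>'" and "\<gamma>' \<in> ctr \<gamma>"
  shows "\<exists>\<gamma>''\<in>ctr \<gamma>. der (\<Gamma> - {\<gamma>}) \<gamma>''"
proof (cases "\<gamma> \<in> \<Gamma>")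
  case True
  then obtain \<gamma>'' where "\<gamma>'' \<in> ctr \<gamma>" and "der ((\<Gamma> \<union> {\<gamma>}) - {\<gamma>}) \<gamma>''"
    using assms unfolding contrapositable_def by blast
  moreover have "(\<Gamma> \<union> {\<gamma>}) - {\<gamma>} = \<Gamma> - {\<gamma>}" by blast
  ultimately show ?thesis by auto
next
  case False
  then show ?thesis using assms(3,4) by auto
qed

lemma satisfies_cutD:
  assumes "satisfies_cut der" and "fin_rel der"
    and "der \<Theta> \<phi>" and "plus_der der \<phi> \<Delta> \<gamma>"
  shows "der (\<Theta> \<union> \<Delta>) \<gamma>"
proof -
  have "finite \<Theta>" using assms(2,3) unfolding fin_rel_def by blast
  moreover have "finite \<Delta>" using plus_der_finite_premises[OF assms(2,4)] .
  ultimately show ?thesis using assms(1,3,4) unfolding satisfies_cut_def by blast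
qed

lemma plus_der_inconsistent_imp_inconsistent_Un:
  assumes fin: "fin_rel der" and contra: "contrapositable der ctr" and cut: "satisfies_cut der"
    and der_\<phi>: "der \<Theta> \<phi>" and inc: "af_inconsistent (plus_der der \<phi>) ctr D"
  shows "af_inconsistent der ctr (D \<union> \<Theta>)"
proof -
  obtain T \<gamma> \<gamma>' where T: "T \<subseteq> D" "\<gamma> \<in> T" "\<gamma>' \<in> ctr \<gamma>" "plus_der der \<phi> (T - {\<gamma>}) \<gamma>'"
    using inc unfolding af_inconsistent_def by blast
  have der_\<gamma>': "der (\<Theta> \<union> (T - {\<gamma>})) \<gamma>'"
    using satisfies_cutD[OF cut fin der_\<phi> T(4)] .
  have "finite (\<Theta> \<union> (T - {\<gamma>}))" using der_\<gamma>' fin unfolding fin_rel_def by blast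
  then obtain \<gamma>'' where "\<gamma>'' \<in> ctr \<gamma>" and "der ((\<Theta> \<union> (T - {\<gamma>})) - {\<gamma>}) \<gamma>''"
    using contrapositable_contrary_without_self[OF contra _ der_\<gamma>' T(3)] by blast
  moreover have "(\<Theta> \<union> (T - {\<gamma>})) - {\<gamma>} = (T \<union> \<Theta>) - {\<gamma>}" by blast
  moreover have "T \<union> \<Theta> \<subseteq> D \<union> \<Theta>" and "\<gamma> \<in> T \<union> \<Theta>" using T(1,2) by auto
  ultimately show ?thesis unfolding af_inconsistent_def by metis
qed

lemma MCSI:
  assumes "M \<subseteq> S" and "af_consistent der ctr M"
    and "\<And>X. M \<subset> X \<Longrightarrow> X \<subseteq> S \<Longrightarrow> af_inconsistent der ctr X"
  shows "M \<in> MCS der ctr S"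
  using assms unfolding MCS_def by blast

lemma MCS_subset: "M \<in> MCS der ctr S \<Longrightarrow> M \<subseteq> S"
  unfolding MCS_def by blast

lemma MCS_consistent: "M \<in> MCS der ctr S \<Longrightarrow> af_consistent der ctr M"
  unfolding MCS_def by blast

lemma MCS_maximal:
  "M \<in> MCS der ctr S \<Longrightarrow> M \<subset> X \<Longrightarrow> X \<subseteq> S \<Longrightarrow> af_inconsistent der ctr X"
  unfolding MCS_def by blast

lemma ex_MCS_superset:
  assumes fin: "fin_rel der" and "D \<subseteq> S" and "af_consistent der ctr D"
  shows "\<exists>M\<in>MCS der ctr S. D \<subseteq> M"
proof -
  define A where "A = {X. D \<subseteq> X \<and> X \<subseteq> S \<and> af_consistent der ctr X}"
  have "\<Union>C \<in> A" if C: "C \<noteq> {}" "subset.chain A C" for C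
  proof -
    have "C \<subseteq> A" using C(2) unfolding subset_chain_def by blast
    have "af_consistent der ctr (\<Union>C)"
    proof
      assume "af_inconsistent der ctr (\<Union>C)"
      then obtain T \<gamma> \<gamma>' where T: "T \<subseteq> \<Union>C" "\<gamma> \<in> T" "\<gamma>' \<in> ctr \<gamma>" "der (T - {\<gamma>}) \<gamma>'"
        unfolding af_inconsistent_def by blast
      have "finite (T - {\<gamma>})" using T(4) fin unfolding fin_rel_def by blast
      then have "finite T" by simp
      then obtain B where "B \<in> C" and "T \<subseteq> B"
        using finite_subset_Union_chain[OF _ T(1) C] by blast
      then have "af_inconsistent der ctr B" using T unfolding af_inconsistent_def by blast
      then show False using \<open>C \<subseteq> A\<close> \<open>B \<in> C\<close> unfolding A_def by blast
    qed
    then show ?thesis using \<open>C \<subseteq> A\<close> C(1) unfolding A_def by blast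
  qed
  moreover have "D \<in> A" using assms unfolding A_def by blast
  ultimately obtain M where M: "M \<in> A" and max: "\<forall>X\<in>A. M \<subseteq> X \<longrightarrow> X = M"
    using subset_Zorn_nonempty[of A] by blast
  have "M \<in> MCS der ctr S"
  proof (rule MCSI)
    show "M \<subseteq> S" and "af_consistent der ctr M" using M unfolding A_def by auto
  next
    fix X assume "M \<subset> X" and "X \<subseteq> S"
    show "af_inconsistent der ctr X"
    proof (rule ccontr)
      assume "af_consistent der ctr X"
      then have "X \<in> A" using \<open>M \<subset> X\<close> \<open>X \<subseteq> S\<close> M unfolding A_def by auto
      then show False using max \<open>M \<subset> X\<close> by blast
    qed
  qed
  then show ?thesis using M unfolding A_def by blast
qed

lemma MCS_subset_imp_eq:
  assumes fin: "fin_rel der" and stronger: "der \<le> der'"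
    and sub: "MCS der ctr S \<subseteq> MCS der' ctr S"
  shows "MCS der ctr S = MCS der' ctr S"
proof
  show "MCS der' ctr S \<subseteq> MCS der ctr S"
  proof
    fix D assume D: "D \<in> MCS der' ctr S"
    have "af_consistent der ctr D"
    proof
      assume "af_inconsistent der ctr D"
      then have "af_inconsistent der' ctr D" by (rule af_inconsistent_der_mono[OF stronger])
      with MCS_consistent[OF D] show False by contradiction
    qed
    then obtain M where M: "M \<in> MCS der ctr S" and "D \<subseteq> M"
      using ex_MCS_superset[OF fin MCS_subset[OF D]] by blast
    have M': "M \<in> MCS der' ctr S" using M sub by blast
    have "\<not> D \<subset> M"
    proof
      assume "D \<subset> M"
      with MCS_maximal[OF D] MCS_subset[OF M'] have "af_inconsistent der' ctr M" by blast
      with MCS_consistent[OF M'] show False by contradiction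
    qed
    then show "D \<in> MCS der ctr S" using M \<open>D \<subseteq> M\<close> by auto
  qed
qed (rule sub)

lemma MCS_imp_MCS_plus_der:
  assumes "fin_rel der" and "contrapositable der ctr" and "satisfies_cut der"
    and "der \<Theta> \<phi>" and "\<Theta> \<subseteq> M" and M: "M \<in> MCS der ctr S"
  shows "M \<in> MCS (plus_der der \<phi>) ctr S"
proof (rule MCSI)
  show "M \<subseteq> S" using MCS_subset[OF M] .
  show "af_consistent (plus_der der \<phi>) ctr M"
  proof
    assume "af_inconsistent (plus_der der \<phi>) ctr M"
    then have "af_inconsistent der ctr (M \<union> \<Theta>)"
      by (rule plus_der_inconsistent_imp_inconsistent_Un[OF assms(1-4)])
    moreover have "M \<union> \<Theta> = M" using \<open>\<Theta> \<subseteq> M\<close> by blast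
    ultimately show False using MCS_consistent[OF M] by simp
  qed
  fix X assume "M \<subset> X" and "X \<subseteq> S"
  with MCS_maximal[OF M] have "af_inconsistent der ctr X" by blast
  then show "af_inconsistent (plus_der der \<phi>) ctr X"
    by (rule af_inconsistent_der_mono[OF der_le_plus_der])
qed

theorem corollary3:
  fixes der :: "'a set \<Rightarrow> 'a \<Rightarrow> bool" and ctr :: "'a \<Rightarrow> 'a set"
    and S :: "'a set" and \<phi> :: 'a
  assumes "fin_rel der"
    and "contrapositable der ctr"
    and "satisfies_cut der"
    and "\<exists>\<Theta>. \<Theta> \<subseteq> \<Inter> (MCS der ctr S) \<and> der \<Theta> \<phi>"
  shows "\<Inter> (MCS der ctr S) = \<Inter> (MCS (plus_der der \<phi>) ctr S)"
proof -
  obtain \<Theta> where \<Theta>: "\<Theta> \<subseteq> \<Inter> (MCS der ctr S)" and "der \<Theta> \<phi>"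
    using assms(4) by blast
  have "MCS der ctr S \<subseteq> MCS (plus_der der \<phi>) ctr S"
  proof
    fix M assume "M \<in> MCS der ctr S"
    moreover have "\<Theta> \<subseteq> M" using \<Theta> \<open>M \<in> MCS der ctr S\<close> by blast
    ultimately show "M \<in> MCS (plus_der der \<phi>) ctr S"
      using MCS_imp_MCS_plus_der[OF assms(1-3) \<open>der \<Theta> \<phi>\<close>] by blast
  qed
  then have "MCS der ctr S = MCS (plus_der der \<phi>) ctr S"
    by (rule MCS_subset_imp_eq[OF assms(1) der_le_plus_der])
  then show ?thesis by simp
qed

end
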